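(* Let $r_0,g_0,g_\infty\in\mathbb C$ and let $G(t,z)$ be the EGF of the GKP triangle $\left[\begin{array}{cc|c}-r_0,&1&g_0\\ 0,&-1&g_\infty\end{array}\right]$ (i.e. the case $r_\infty=1$, $r_1=-r_0$, $g_1=-g_0-g_\infty$ of the new parametrization). If $r_0\neq0$ then near $(0,0)$ $$G(t,z)=\bigl[(1+r_0z)^{1/r_0}\bigr]^{g_0}\bigl[(1-t)+t(1+r_0z)^{1/r_0}\bigr]^{g_\infty}=\bigl[t+(1-t)(1+r_0z)^{-1/r_0}\bigr]^{-g_0}\bigl[(1-t)+t(1+r_0z)^{1/r_0}\bigr]^{-g_1},$$ and if $r_0=0$ then $G(t,z)=e^{g_0z}\,[(1-t)+te^z]^{g_\infty}$. (Principal branches, equal to $1$ at $z=0$.)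
   Context: GKP triangle: for complex parameters $\alpha,\beta,\gamma,\alpha',\beta',\gamma'$, the array $T_{n,k}=\left[\begin{array}{cc|c}\alpha,&\beta&\gamma\\ \alpha',&\beta'&\gamma'\end{array}\right]_{n,k}$ is defined by $T_{0,0}=1$, $T_{n,k}=0$ if $n<0$, $k<0$ or $k>n$, and $T_{n+1,k+1}=[\alpha n+\beta(k+1)+\gamma]T_{n,k+1}+[\alpha' n+\beta' k+\gamma']T_{n,k}$ for $n\ge0$, $k\in\mathbb Z$; its EGF is $G(t,z)=\sum_{n\ge0}\sum_{k=0}^nT_{n,k}t^kz^n/n!$. *)

theory Defs
  imports "HOL-Analysis.Analysis"
begin

text \<open>GKP triangle T n k for parameters a b c a' b' c' (alpha, beta, gamma, alpha', beta', gamma').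
  T 0 k = [k = 0]; T (n+1) K = (a n + b K + c) T n K + (a' n + b' (K-1) + c') T n (K-1)
  for all integers K.  This recurrence (with T n k = 0 for k < 0 or k > n, which it forces)
  is exactly the defining recurrence with K = k+1.\<close>
primrec gkp :: "complex \<Rightarrow> complex \<Rightarrow> complex \<Rightarrow> complex \<Rightarrow> complex \<Rightarrow> complex \<Rightarrow> nat \<Rightarrow> int \<Rightarrow> complex" where
  "gkp a b c a' b' c' 0 k = (if k = 0 then 1 else 0)"
| "gkp a b c a' b' c' (Suc n) k =
     (if k < 0 \<or> k > int n + 1 then 0 else
      (a * of_nat n + b * of_int k + c) * gkp a b c a' b' c' n k
      + (a' * of_nat n + b' * of_int (k - 1) + c') * gkp a b c a' b' c' n (k - 1))"

definition gkp_egf_term :: "complex \<Rightarrow> complex \<Rightarrow> complex \<Rightarrow> complex \<Rightarrow> complex \<Rightarrow> complex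
    \<Rightarrow> complex \<Rightarrow> complex \<Rightarrow> nat \<Rightarrow> complex" where
  "gkp_egf_term a b c a' b' c' t z n =
     (\<Sum>k=0..n. gkp a b c a' b' c' n (int k) * t ^ k) * z ^ n / of_nat (fact n)"

end

theory Submission
  imports Defs "HOL-Complex_Analysis.Complex_Analysis"
begin

text \<open>
  For a GKP triangle with \<alpha>' = 0, let F and S solve F' = F (\<gamma> + \<gamma>' S) / (1 - \<alpha> z) and
  S' = S (\<beta> + \<beta>' S) / (1 - \<alpha> z). Differentiating F S^k / (1 - \<alpha> z)^n produces exactly the two
  weights of the recurrence, so the n-th derivative of F is F (1 - \<alpha> z)^-n T_n(S), where T_n is
  the n-th row polynomial. Hence, if F(0) = 1 and S(0) = t, the EGF is the Taylor series of F.
  For (\<alpha>, \<beta>, \<beta>') = (-r0, 1, -1) both equations are solved by F = exp (g0 l) (1 - t + t e^l)^ginf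
  and S = t e^l / (1 - t + t e^l), where l' = 1 / (1 + r0 z) and l(0) = 0, i.e. l = log (1 + r0 z) / r0,
  or l = z if r0 = 0. Near the origin l and Ln (1 - t + t e^l) have imaginary parts in (-\<pi>/2, \<pi>/2),
  so the principal powers in the closed forms are the exponentials of the corresponding logarithms.
\<close>

definition gkp_row :: "complex \<Rightarrow> complex \<Rightarrow> complex \<Rightarrow> complex \<Rightarrow> complex \<Rightarrow> complex
    \<Rightarrow> nat \<Rightarrow> complex \<Rightarrow> complex" where
  "gkp_row a b c a' b' c' n x = (\<Sum>k=0..n. gkp a b c a' b' c' n (int k) * x ^ k)"

lemma gkp_egf_term_eq_row:
  "gkp_egf_term a b c a' b' c' t z = (\<lambda>n. gkp_row a b c a' b' c' n t * z ^ n / fact n)"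
  by (simp add: fun_eq_iff gkp_egf_term_def gkp_row_def)

lemma gkp_eq_0_outside: "k < 0 \<or> k > int n \<Longrightarrow> gkp a b c a' b' c' n k = 0"
  by (cases n) auto

lemma gkp_row_0 [simp]: "gkp_row a b c a' b' c' 0 x = 1"
  by (simp add: gkp_row_def)

lemma gkp_row_Suc:
  "gkp_row a b c a' b' c' (Suc n) x =
     (\<Sum>k=0..n. gkp a b c a' b' c' n (int k) *
        ((a * of_nat n + b * of_nat k + c) * x ^ k
         + (a' * of_nat n + b' * of_nat k + c') * x ^ Suc k))"
proof -
  let ?T = "gkp a b c a' b' c' n"
  have "gkp_row a b c a' b' c' (Suc n) x
      = (\<Sum>k=0..Suc n. (a * of_nat n + b * of_nat k + c) * ?T (int k) * x ^ k)
        + (\<Sum>k=0..Suc n. (a' * of_nat n + b' * of_int (int k - 1) + c') * ?T (int k - 1) * x ^ k)"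
    by (simp add: gkp_row_def sum.distrib[symmetric] algebra_simps)
  also have "(\<Sum>k=0..Suc n. (a * of_nat n + b * of_nat k + c) * ?T (int k) * x ^ k)
      = (\<Sum>k=0..n. (a * of_nat n + b * of_nat k + c) * ?T (int k) * x ^ k)"
    by (simp add: gkp_eq_0_outside)
  also have "(\<Sum>k=0..Suc n. (a' * of_nat n + b' * of_int (int k - 1) + c') * ?T (int k - 1) * x ^ k)
      = (\<Sum>k=0..n. (a' * of_nat n + b' * of_nat k + c') * ?T (int k) * x ^ Suc k)"
    by (subst sum.atLeast0_atMost_Suc_shift) (simp add: gkp_eq_0_outside)
  finally show ?thesis
    by (simp add: sum.distrib[symmetric] algebra_simps)
qed

lemma has_field_derivative_gkp_monomial:
  fixes F S :: "complex \<Rightarrow> complex"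
  assumes F': "(F has_field_derivative F z * (c + c' * S z) / (1 - a * z)) (at z)"
    and S': "(S has_field_derivative S z * (b + b' * S z) / (1 - a * z)) (at z)"
    and nz: "1 - a * z \<noteq> 0"
  shows "((\<lambda>z. F z * S z ^ k / (1 - a * z) ^ n) has_field_derivative
           F z / (1 - a * z) ^ Suc n
           * ((a * of_nat n + b * of_nat k + c) * S z ^ k + (b' * of_nat k + c') * S z ^ Suc k)) (at z)"
proof -
  have P': "((\<lambda>z. 1 - a * z) has_field_derivative - a) (at z)"
    by (rule derivative_eq_intros | simp)+
  have D: "((\<lambda>z. F z * S z ^ k / (1 - a * z) ^ n) has_field_derivative
      ((F z * (c + c' * S z) / (1 - a * z) * S z ^ k
        + of_nat k * (S z * (b + b' * S z) / (1 - a * z) * S z ^ (k - Suc 0)) * F z) * (1 - a * z) ^ n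
       - F z * S z ^ k * (of_nat n * (- a * (1 - a * z) ^ (n - Suc 0))))
      / ((1 - a * z) ^ n * (1 - a * z) ^ n)) (at z)"
    by (intro DERIV_divide DERIV_mult DERIV_power F' S' P') (use nz in auto)
  have k: "of_nat k * (S z * (b + b' * S z) / (1 - a * z) * S z ^ (k - Suc 0))
      = of_nat k * S z ^ k * (b + b' * S z) / (1 - a * z)"
    by (cases k) (simp_all add: field_simps)
  have n: "of_nat n * (- a * (1 - a * z) ^ (n - Suc 0)) = - of_nat n * a * (1 - a * z) ^ n / (1 - a * z)"
    using nz by (cases n) (simp_all add: field_simps)
  \<comment> \<open>stated for atoms \<open>p\<close>, \<open>q\<close> so that \<open>field_simps\<close> does not expand the powers of \<open>1 - a z\<close>\<close>
  have alg: "\<And>p q Sk. p \<noteq> 0 \<Longrightarrow> q \<noteq> 0 \<Longrightarrow>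
      ((F z * (c + c' * S z) / p * Sk + of_nat k * Sk * (b + b' * S z) / p * F z) * q
        - F z * Sk * (- of_nat n * a * q / p)) / (q * q)
      = F z / (p * q) * ((a * of_nat n + b * of_nat k + c) * Sk + (b' * of_nat k + c') * (S z * Sk))"
    by (simp add: field_simps)
  show ?thesis
    using D unfolding k n power_Suc
    by (rule DERIV_cong) (use alg nz in simp)
qed

lemma has_field_derivative_gkp_row:
  fixes F S :: "complex \<Rightarrow> complex"
  assumes F': "(F has_field_derivative F z * (c + c' * S z) / (1 - a * z)) (at z)"
    and S': "(S has_field_derivative S z * (b + b' * S z) / (1 - a * z)) (at z)"
    and nz: "1 - a * z \<noteq> 0"
  shows "((\<lambda>z. F z / (1 - a * z) ^ n * gkp_row a b c 0 b' c' n (S z)) has_field_derivative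
           F z / (1 - a * z) ^ Suc n * gkp_row a b c 0 b' c' (Suc n) (S z)) (at z)"
proof -
  let ?T = "\<lambda>k. gkp a b c 0 b' c' n (int k)"
  have "((\<lambda>z. \<Sum>k=0..n. ?T k * (F z * S z ^ k / (1 - a * z) ^ n)) has_field_derivative
      (\<Sum>k=0..n. ?T k * (F z / (1 - a * z) ^ Suc n
        * ((a * of_nat n + b * of_nat k + c) * S z ^ k + (b' * of_nat k + c') * S z ^ Suc k)))) (at z)"
    by (intro DERIV_sum DERIV_cmult has_field_derivative_gkp_monomial F' S' nz)
  moreover have "(\<lambda>z. F z / (1 - a * z) ^ n * gkp_row a b c 0 b' c' n (S z))
      = (\<lambda>z. \<Sum>k=0..n. ?T k * (F z * S z ^ k / (1 - a * z) ^ n))"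
    by (simp add: fun_eq_iff gkp_row_def sum_distrib_left algebra_simps)
  moreover have "(\<Sum>k=0..n. ?T k * (F z / (1 - a * z) ^ Suc n
        * ((a * of_nat n + b * of_nat k + c) * S z ^ k + (b' * of_nat k + c') * S z ^ Suc k)))
      = F z / (1 - a * z) ^ Suc n * gkp_row a b c 0 b' c' (Suc n) (S z)"
    unfolding gkp_row_Suc by (simp add: sum_distrib_left mult_ac)
  ultimately show ?thesis
    by simp
qed

lemma higher_deriv_gkp_ode:
  fixes F S :: "complex \<Rightarrow> complex"
  assumes "open A"
    and F': "\<And>z. z \<in> A \<Longrightarrow> (F has_field_derivative F z * (c + c' * S z) / (1 - a * z)) (at z)"
    and S': "\<And>z. z \<in> A \<Longrightarrow> (S has_field_derivative S z * (b + b' * S z) / (1 - a * z)) (at z)"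
    and nz: "\<And>z. z \<in> A \<Longrightarrow> 1 - a * z \<noteq> 0"
    and "z \<in> A"
  shows "(deriv ^^ n) F z = F z / (1 - a * z) ^ n * gkp_row a b c 0 b' c' n (S z)"
  using \<open>z \<in> A\<close>
proof (induction n arbitrary: z)
  case 0
  then show ?case by simp
next
  case (Suc n)
  have "eventually (\<lambda>y. y \<in> A) (nhds z)"
    using \<open>open A\<close> Suc.prems by (rule eventually_nhds_in_open)
  then have "deriv ((deriv ^^ n) F) z
      = deriv (\<lambda>z. F z / (1 - a * z) ^ n * gkp_row a b c 0 b' c' n (S z)) z"
    by (intro deriv_cong_ev) (auto elim!: eventually_mono simp: Suc.IH)
  also have "\<dots> = F z / (1 - a * z) ^ Suc n * gkp_row a b c 0 b' c' (Suc n) (S z)"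
    by (intro DERIV_imp_deriv has_field_derivative_gkp_row F' S' nz Suc.prems)
  finally show ?case by simp
qed

theorem gkp_egf_sums_of_ode:
  fixes F S :: "complex \<Rightarrow> complex"
  assumes F': "\<And>z. z \<in> ball 0 e \<Longrightarrow> (F has_field_derivative F z * (c + c' * S z) / (1 - a * z)) (at z)"
    and S': "\<And>z. z \<in> ball 0 e \<Longrightarrow> (S has_field_derivative S z * (b + b' * S z) / (1 - a * z)) (at z)"
    and nz: "\<And>z. z \<in> ball 0 e \<Longrightarrow> 1 - a * z \<noteq> 0"
    and "F 0 = 1" "S 0 = t" and w: "w \<in> ball 0 e"
  shows "gkp_egf_term a b c 0 b' c' t w sums F w"
proof -
  have "F holomorphic_on ball 0 e"
    by (subst holomorphic_on_open) (use F' in blast)+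
  then have "(\<lambda>n. (deriv ^^ n) F 0 / fact n * (w - 0) ^ n) sums F w"
    using w by (rule holomorphic_power_series)
  moreover have "0 \<in> ball (0::complex) e"
    using w norm_ge_zero[of w] by (simp del: norm_ge_zero)
  then have "(deriv ^^ n) F 0 = gkp_row a b c 0 b' c' n t" for n
    using higher_deriv_gkp_ode[where A = "ball 0 e", OF open_ball F' S' nz] \<open>F 0 = 1\<close> \<open>S 0 = t\<close>
    by simp
  ultimately show ?thesis
    by (simp add: gkp_egf_term_eq_row)
qed

lemma gkp_egf_sums_exp_Ln:
  fixes l :: "complex \<Rightarrow> complex" and r0 g0 ginf t w :: complex and e :: real
  assumes l': "\<And>z. z \<in> ball 0 e \<Longrightarrow> (l has_field_derivative 1 / (1 + r0 * z)) (at z)"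
    and nz: "\<And>z. z \<in> ball 0 e \<Longrightarrow> 1 + r0 * z \<noteq> 0"
    and W_pos: "\<And>z. z \<in> ball 0 e \<Longrightarrow> 0 < Re (1 - t + t * exp (l z))"
    and "l 0 = 0" and w: "w \<in> ball 0 e"
  shows "gkp_egf_term (- r0) 1 g0 0 (- 1) ginf t w sums
           exp (g0 * l w + ginf * Ln (1 - t + t * exp (l w)))"
proof -
  define P where "P z = 1 + r0 * z" for z
  define W where "W z = 1 - t + t * exp (l z)" for z
  define S where "S z = t * exp (l z) / W z" for z
  have P_nz: "P z \<noteq> 0" if "z \<in> ball 0 e" for z
    using nz[OF that] by (simp add: P_def)
  have W_nz: "W z \<noteq> 0" if "z \<in> ball 0 e" for z
    using W_pos[OF that] unfolding W_def by (metis less_irrefl zero_complex.sel(1))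
  have l'': "(l has_field_derivative 1 / P z) (at z)" if "z \<in> ball 0 e" for z
    using l'[OF that] by (simp add: P_def)
  have W': "(W has_field_derivative t * exp (l z) / P z) (at z)" if "z \<in> ball 0 e" for z
    unfolding W_def by (rule derivative_eq_intros l''[OF that] | simp)+
  have F': "((\<lambda>z. exp (g0 * l z + ginf * Ln (W z))) has_field_derivative
       exp (g0 * l z + ginf * Ln (W z)) * (g0 + ginf * S z) / P z) (at z)"
    if z: "z \<in> ball 0 e" for z
  proof -
    have "W z \<notin> \<real>\<^sub>\<le>\<^sub>0"
      using W_pos[OF z] by (auto simp: W_def complex_nonpos_Reals_iff)
    then have "((\<lambda>z. g0 * l z + ginf * Ln (W z)) has_field_derivative
        g0 * (1 / P z) + ginf * (inverse (W z) * (t * exp (l z) / P z))) (at z)"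
      by (intro DERIV_add DERIV_cmult DERIV_chain2[OF has_field_derivative_Ln] W' l'' z)
    from DERIV_chain2[OF DERIV_exp this] show ?thesis
      by (rule DERIV_cong) (use W_nz[OF z] P_nz[OF z] in \<open>simp add: S_def field_simps\<close>)
  qed
  have S': "(S has_field_derivative S z * (1 - S z) / P z) (at z)" if z: "z \<in> ball 0 e" for z
  proof -
    have "((\<lambda>z. t * exp (l z) / W z) has_field_derivative
         (t * (exp (l z) * (1 / P z)) * W z - t * exp (l z) * (t * exp (l z) / P z))
         / (W z * W z)) (at z)"
      by (intro DERIV_divide DERIV_cmult DERIV_chain2[OF DERIV_exp] l'' W' W_nz z)
    then show ?thesis
      unfolding S_def[abs_def]
      by (rule DERIV_cong) (use W_nz[OF z] P_nz[OF z] in \<open>simp add: field_simps\<close>)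
  qed
  have "gkp_egf_term (- r0) 1 g0 0 (- 1) ginf t w sums exp (g0 * l w + ginf * Ln (W w))"
    by (rule gkp_egf_sums_of_ode[where S = S and e = e])
      (use F' S' nz \<open>l 0 = 0\<close> w in \<open>auto simp: P_def S_def W_def\<close>)
  then show ?thesis
    by (simp add: W_def)
qed

lemma Re_affine_exp_pos:
  fixes t u :: complex
  assumes "norm t < 1/4" and "norm u \<le> 1"
  shows "0 < Re (1 - t + t * exp u)"
proof -
  have "norm (exp u) \<le> exp 1"
    using norm_exp[of u] assms(2) by (meson exp_le_cancel_iff order_trans)
  also have "exp 1 \<le> (3::real)"
    by (rule exp_le)
  finally have "norm (exp u - 1) \<le> 4"
    using norm_triangle_ineq4[of "exp u" 1] by simp
  then have "norm (t * (exp u - 1)) < 1"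
    using assms(1) mult_left_mono[OF \<open>norm (exp u - 1) \<le> 4\<close> norm_ge_zero[of t]]
    by (simp add: norm_mult)
  then have "\<bar>Re (t * (exp u - 1))\<bar> < 1"
    using abs_Re_le_cmod le_less_trans by blast
  then show ?thesis
    by (simp add: algebra_simps)
qed

lemma has_field_derivative_Ln_affine_div:
  fixes r z :: complex
  assumes "r \<noteq> 0" and "0 < Re (1 + r * z)"
  shows "((\<lambda>z. Ln (1 + r * z) / r) has_field_derivative 1 / (1 + r * z)) (at z)"
proof -
  have "1 + r * z \<notin> \<real>\<^sub>\<le>\<^sub>0"
    using assms(2) by (auto simp: complex_nonpos_Reals_iff)
  then have "((\<lambda>z. Ln (1 + r * z) / r) has_field_derivative inverse (1 + r * z) * (0 + r * 1) / r) (at z)"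
    by (intro DERIV_cdivide DERIV_chain2[OF has_field_derivative_Ln] derivative_eq_intros) auto
  then show ?thesis
    using assms(1) by (simp add: divide_inverse mult.assoc)
qed

lemma exp_powr_mult_affine_powr:
  fixes L g h t :: complex
  assumes Im_L: "\<bar>Im L\<bar> < pi / 2" and W_pos: "0 < Re (1 - t + t * exp L)"
  shows "exp L powr g * (1 - t + t * exp L) powr h = exp (g * L + h * Ln (1 - t + t * exp L))"
    and "exp L powr g * (1 - t + t * exp L) powr h
           = (t + (1 - t) * exp (- L)) powr (- g) * (1 - t + t * exp L) powr (g + h)"
proof -
  define W where "W = 1 - t + t * exp L"
  have W_nz: "W \<noteq> 0"
    using W_pos unfolding W_def by (metis less_irrefl zero_complex.sel(1))
  have Im_Ln_W: "\<bar>Im (Ln W)\<bar> < pi / 2"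
    using W_pos unfolding W_def by (rule Re_Ln_pos_lt_imp)
  have expL: "exp L powr g = exp (g * L)"
    using Im_L pi_gt3 by (subst exp_powr_complex) (auto simp: mult.commute)
  show *: "exp L powr g * (1 - t + t * exp L) powr h = exp (g * L + h * Ln (1 - t + t * exp L))"
    unfolding expL using W_nz by (simp add: powr_def exp_add W_def)
  have "t + (1 - t) * exp (- L) = exp (Ln W - L)"
    using W_nz by (simp add: W_def exp_diff exp_minus field_simps)
  also have "\<dots> powr (- g) = exp (- g * (Ln W - L))"
    using Im_L Im_Ln_W by (subst exp_powr_complex) (auto simp: mult.commute)
  finally show "exp L powr g * (1 - t + t * exp L) powr h
           = (t + (1 - t) * exp (- L)) powr (- g) * (1 - t + t * exp L) powr (g + h)"
    unfolding * using W_nz by (simp add: W_def powr_def exp_add[symmetric] algebra_simps)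
qed

lemma gkp_egf_closed_form_r0_zero:
  fixes g0 ginf t z :: complex
  assumes "norm t < 1/4" and "norm z < 1/4"
  shows "gkp_egf_term 0 1 g0 0 (- 1) ginf t z sums (exp (g0 * z) * ((1 - t) + t * exp z) powr ginf)"
proof -
  have W_pos: "0 < Re (1 - t + t * exp y)" if "y \<in> ball 0 (1/4)" for y
    using that assms by (intro Re_affine_exp_pos) auto
  have "gkp_egf_term (- 0) 1 g0 0 (- 1) ginf t z sums exp (g0 * z + ginf * Ln (1 - t + t * exp z))"
    by (rule gkp_egf_sums_exp_Ln[where l = "\<lambda>z. z" and e = "1/4"]) (use W_pos assms in auto)
  moreover have "1 - t + t * exp z \<noteq> 0"
    using W_pos[of z] assms(2) by (metis mem_ball_0 less_irrefl zero_complex.sel(1))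
  ultimately show ?thesis
    by (simp add: powr_def exp_add mult.commute)
qed

lemma gkp_egf_closed_form_r0_nonzero:
  fixes r0 g0 ginf t z :: complex
  assumes r0: "r0 \<noteq> 0" and t: "norm t < 1/4" and z: "norm z < min (1/4) (1 / (2 * norm r0 + 1))"
  shows "gkp_egf_term (- r0) 1 g0 0 (- 1) ginf t z sums
           (((1 + r0 * z) powr (1 / r0)) powr g0 * ((1 - t) + t * (1 + r0 * z) powr (1 / r0)) powr ginf)"
    and "((1 + r0 * z) powr (1 / r0)) powr g0 * ((1 - t) + t * (1 + r0 * z) powr (1 / r0)) powr ginf
           = (t + (1 - t) * (1 + r0 * z) powr (- 1 / r0)) powr (- g0)
             * ((1 - t) + t * (1 + r0 * z) powr (1 / r0)) powr (g0 + ginf)"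
proof -
  define e where "e = min (1/4) (1 / (2 * norm r0 + 1))"
  define L where "L y = Ln (1 + r0 * y) / r0" for y
  have small: "norm (r0 * y) < 1/2" if "y \<in> ball 0 e" for y
  proof -
    have "norm y * (2 * norm r0 + 1) < 1"
      using that by (simp add: e_def pos_less_divide_eq add_nonneg_pos)
    moreover have "2 * norm (r0 * y) \<le> norm y * (2 * norm r0 + 1)"
      by (simp add: norm_mult algebra_simps)
    ultimately show ?thesis
      by linarith
  qed
  have Re_pos: "0 < Re (1 + r0 * y)" if "y \<in> ball 0 e" for y
    using abs_Re_le_cmod[of "r0 * y"] small[OF that] by simp
  have L_le: "norm (L y) \<le> 1/2" if "y \<in> ball 0 e" for y
  proof -
    have "norm (L y) \<le> 2 * norm y"
      using norm_Ln_le[OF small[OF that]] r0 by (simp add: L_def norm_mult norm_divide field_simps)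
    also have "\<dots> \<le> 1/2"
      using that by (simp add: e_def)
    finally show ?thesis .
  qed
  have nz: "1 + r0 * y \<noteq> 0" if "y \<in> ball 0 e" for y
    using Re_pos[OF that] by (metis less_irrefl zero_complex.sel(1))
  have W_pos: "0 < Re (1 - t + t * exp (L y))" if "y \<in> ball 0 e" for y
    using t L_le[OF that] by (intro Re_affine_exp_pos) auto
  have z_ball: "z \<in> ball 0 e"
    using z by (simp add: e_def)
  have "gkp_egf_term (- r0) 1 g0 0 (- 1) ginf t z sums exp (g0 * L z + ginf * Ln (1 - t + t * exp (L z)))"
    by (rule gkp_egf_sums_exp_Ln[where e = e])
      (use has_field_derivative_Ln_affine_div r0 Re_pos nz W_pos z_ball in \<open>auto simp: L_def[abs_def]\<close>)
  moreover have "\<bar>Im (L z)\<bar> < pi / 2"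
    using abs_Im_le_cmod[of "L z"] L_le[OF z_ball] pi_gt3 by simp
  moreover have "(1 + r0 * z) powr (1 / r0) = exp (L z)" "(1 + r0 * z) powr (- 1 / r0) = exp (- L z)"
    using nz[OF z_ball] by (simp_all add: powr_def L_def)
  ultimately show "gkp_egf_term (- r0) 1 g0 0 (- 1) ginf t z sums
           (((1 + r0 * z) powr (1 / r0)) powr g0 * ((1 - t) + t * (1 + r0 * z) powr (1 / r0)) powr ginf)"
    and "((1 + r0 * z) powr (1 / r0)) powr g0 * ((1 - t) + t * (1 + r0 * z) powr (1 / r0)) powr ginf
           = (t + (1 - t) * (1 + r0 * z) powr (- 1 / r0)) powr (- g0)
             * ((1 - t) + t * (1 + r0 * z) powr (1 / r0)) powr (g0 + ginf)"
    using exp_powr_mult_affine_powr[of "L z" t g0 ginf] W_pos[OF z_ball] by simp_all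
qed

theorem mainTheorem4:
  fixes r0 g0 ginf :: complex
  defines "g1 \<equiv> - g0 - ginf"
  shows "(r0 \<noteq> 0 \<longrightarrow>
           (\<exists>\<epsilon>>0. \<forall>t z. norm t < \<epsilon> \<and> norm z < \<epsilon> \<longrightarrow>
              gkp_egf_term (- r0) 1 g0 0 (- 1) ginf t z sums
                (((1 + r0 * z) powr (1 / r0)) powr g0
                 * ((1 - t) + t * (1 + r0 * z) powr (1 / r0)) powr ginf)
            \<and> ((1 + r0 * z) powr (1 / r0)) powr g0
                 * ((1 - t) + t * (1 + r0 * z) powr (1 / r0)) powr ginf
              = (t + (1 - t) * (1 + r0 * z) powr (- 1 / r0)) powr (- g0)
                 * ((1 - t) + t * (1 + r0 * z) powr (1 / r0)) powr (- g1)))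
       \<and> (r0 = 0 \<longrightarrow>
           (\<exists>\<epsilon>>0. \<forall>t z. norm t < \<epsilon> \<and> norm z < \<epsilon> \<longrightarrow>
              gkp_egf_term (- r0) 1 g0 0 (- 1) ginf t z sums
                (exp (g0 * z) * ((1 - t) + t * exp z) powr ginf)))"
proof -
  have "- g1 = g0 + ginf"
    by (simp add: g1_def)
  then show ?thesis
    using gkp_egf_closed_form_r0_nonzero[of r0] gkp_egf_closed_form_r0_zero
    by (intro conjI impI exI[of _ "min (1/4) (1 / (2 * norm r0 + 1))"] allI) (auto simp: add_nonneg_pos)
qed

end
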